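(* For every positive integer $n$, let $\Lambda_n$ be the set of sequences $w=w_0w_1\cdots w_n\in\{0,1\}^{n+1}$ with $w_0=0$ and $w_n=1$. There exists a bijection $\lambda\mapsto w(\lambda)=w_0w_1\cdots w_n$ from $\mathcal{H}_n$ to $\Lambda_n$ such that for every $\lambda\in\mathcal{H}_n$: $$\ell(\lambda)=|\{1\le i\le n: w_i=1\}|,\qquad \mathrm{rep}(\lambda)=|\{1\le i\le n: w_i=w_{i-1}=1\}|,$$ $$\mathrm{even}(\lambda)=|\{1\le i\le n: w_i=1 \text{ and } |\{0\le j<i: w_j=0\}| \text{ is even}\}|.$$
   Context: A partition is a finite nonempty weakly decreasing sequence $\lambda=(\lambda_1,\ldots,\lambda_k)$ of positive integers; $\ell(\lambda)=k$. The perimeter is $\Gamma(\lambda)=\lambda_1+\ell(\lambda)-1$; $\mathcal{H}_n$ is the set of partitions with perimeter $n$. $\mathrm{rep}(\lambda)=|\{1\le i\le \ell(\lambda)-1:\lambda_i=\lambda_{i+1}\}|$ and $\mathrm{even}(\lambda)=|\{1\le i\le\ell(\lambda):\lambda_i\text{ even}\}|$. *)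

theory Defs
  imports Main
begin

text \<open>A partition is a nonempty weakly decreasing list of positive integers
  (lambda_1 = hd, lambda_i = xs ! (i-1)).\<close>
definition is_partition :: "nat list \<Rightarrow> bool" where
  "is_partition xs \<longleftrightarrow> xs \<noteq> [] \<and> sorted_wrt (\<ge>) xs \<and> (\<forall>x\<in>set xs. 0 < x)"

definition perimeter :: "nat list \<Rightarrow> nat" where
  "perimeter xs = hd xs + length xs - 1"

definition Hset :: "nat \<Rightarrow> nat list set" where
  "Hset n = {xs. is_partition xs \<and> perimeter xs = n}"

text \<open>rep: number of 1 <= i <= l-1 with lambda_i = lambda_{i+1}; in 0-based indexing
  this is the number of i with i+1 < length xs and xs!i = xs!(i+1).\<close>
definition rep :: "nat list \<Rightarrow> nat" where
  "rep xs = card {i. i + 1 < length xs \<and> xs ! i = xs ! (i + 1)}"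

definition even_parts :: "nat list \<Rightarrow> nat" where
  "even_parts xs = card {i. i < length xs \<and> even (xs ! i)}"

text \<open>Binary words w_0 ... w_n as bool lists of length n+1 (True = 1), w_0 = 0, w_n = 1.\<close>
definition Lambda :: "nat \<Rightarrow> bool list set" where
  "Lambda n = {w. length w = n + 1 \<and> \<not> w ! 0 \<and> w ! n}"

end

theory Submission
  imports Defs
begin

text \<open>List the parts of a partition in increasing order \<open>y\<^sub>1 \<le> \<dots> \<le> y\<^sub>l\<close> and
  encode each part \<open>y\<^sub>k\<close> by as many zeros as it exceeds its predecessor (with \<open>y\<^sub>0 = 0\<close>),
  followed by a one. Then the number of zeros in front of the \<open>k\<close>-th one is \<open>y\<^sub>k\<close>, so
  reading off these zero counts inverts the encoding. The word has \<open>l + y\<^sub>l = \<ell>(\<lambda>) + \<lambda>\<^sub>1\<close>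
  letters, starts with a zero as \<open>y\<^sub>1 > 0\<close>, and ends with a one. Ones are parts, a one
  directly after a one is a part equal to its predecessor, and a one preceded by an even
  number of zeros is an even part.\<close>

lemma card_less_Suc_split:
  "card {i. i < Suc m \<and> P i} = (if P 0 then 1 else 0) + card {i. i < m \<and> P (Suc i)}"
proof -
  have split: "{i. i < Suc m \<and> P i} = (if P 0 then {0} else {}) \<union> Suc ` {i. i < m \<and> P (Suc i)}"
    by (auto simp: image_iff less_Suc_eq_0_disj)
  have "card (Suc ` {i. i < m \<and> P (Suc i)}) = card {i. i < m \<and> P (Suc i)}"
    by (rule card_image) simp
  then show ?thesis
    unfolding split by (auto simp: card_insert_if)
qed

lemma last_eq_nth_Suc: "length xs = Suc n \<Longrightarrow> last xs = xs ! n"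
  by (cases xs rule: rev_cases) (auto simp: nth_append)

lemma rep_Cons: "rep (x # xs) = (if xs \<noteq> [] \<and> x = hd xs then 1 else 0) + rep xs"
proof (cases xs)
  case (Cons y ys)
  have "rep (x # xs) = card {i. i < Suc (length ys) \<and> (x # y # ys) ! i = (x # y # ys) ! Suc i}"
    unfolding rep_def Cons by simp
  also have "\<dots> = (if x = y then 1 else 0) + rep xs"
    unfolding card_less_Suc_split by (simp add: rep_def Cons)
  finally show ?thesis
    using Cons by simp
qed (simp add: rep_def)

lemma rep_append_single:
  "rep (xs @ [y]) = rep xs + (if xs \<noteq> [] \<and> last xs = y then 1 else 0)"
proof -
  let ?R = "{i. i + 1 < length xs \<and> xs ! i = xs ! (i + 1)}"
  have split: "{i. i + 1 < length (xs @ [y]) \<and> (xs @ [y]) ! i = (xs @ [y]) ! (i + 1)}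
      = ?R \<union> (if xs \<noteq> [] \<and> last xs = y then {length xs - 1} else {})"
    by (cases xs rule: rev_cases) (auto simp: nth_append less_Suc_eq)
  have "finite ?R" and "length xs - 1 \<notin> ?R"
    by (auto intro: finite_subset[of _ "{..<length xs}"])
  then show ?thesis
    unfolding rep_def split by auto
qed

lemma rep_rev: "rep (rev xs) = rep xs"
  by (induction xs rule: rev_induct) (simp_all add: rep_Cons rep_append_single hd_rev)

lemma even_parts_eq_length_filter: "even_parts xs = length (filter even xs)"
  unfolding even_parts_def by (simp add: length_filter_conv_card)

lemma even_parts_rev: "even_parts (rev xs) = even_parts xs"
  by (simp add: even_parts_eq_length_filter rev_filter[symmetric])

text \<open>Here and in \<open>ones_after_even_zeros\<close>, the parameter \<open>c\<close> is the number of zeros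
  already read, which is also the previous part.\<close>

fun parts_of_word :: "nat \<Rightarrow> bool list \<Rightarrow> nat list" where
  "parts_of_word c [] = []"
| "parts_of_word c (False # w) = parts_of_word (Suc c) w"
| "parts_of_word c (True # w) = c # parts_of_word c w"

fun word_of_parts :: "nat \<Rightarrow> nat list \<Rightarrow> bool list" where
  "word_of_parts c [] = []"
| "word_of_parts c (y # ys) = replicate (y - c) False @ True # word_of_parts y ys"

lemma parts_of_word_replicate_False:
  "parts_of_word c (replicate k False @ w) = parts_of_word (c + k) w"
  by (induction k arbitrary: c) auto

lemma parts_of_word_ge: "x \<in> set (parts_of_word c w) \<Longrightarrow> c \<le> x"
  by (induction c w rule: parts_of_word.induct) fastforce+

lemma sorted_parts_of_word: "sorted (parts_of_word c w)"
  by (induction c w rule: parts_of_word.induct) (auto dest: parts_of_word_ge)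

lemma parts_of_word_eq_Nil_iff: "parts_of_word c w = [] \<longleftrightarrow> True \<notin> set w"
  by (induction c w rule: parts_of_word.induct) auto

lemma length_parts_of_word: "length (parts_of_word c w) = card {i. i < length w \<and> w ! i}"
proof -
  have "length (parts_of_word c w) = length (filter id w)"
    by (induction c w rule: parts_of_word.induct) auto
  then show ?thesis
    by (simp add: length_filter_conv_card)
qed

lemma parts_of_word_word_of_parts:
  "sorted ys \<Longrightarrow> \<forall>y\<in>set ys. c \<le> y \<Longrightarrow> parts_of_word c (word_of_parts c ys) = ys"
  by (induction ys arbitrary: c) (auto simp: parts_of_word_replicate_False)

lemma word_of_parts_Cons_gt:
  "c < y \<Longrightarrow> word_of_parts c (y # ys) = False # word_of_parts (Suc c) (y # ys)"
  by (simp add: Suc_diff_Suc[symmetric])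

lemma word_of_parts_parts_of_word:
  "w = [] \<or> last w \<Longrightarrow> word_of_parts c (parts_of_word c w) = w"
proof (induction c w rule: parts_of_word.induct)
  case (2 c w)
  then have "w \<noteq> []" and "last w"
    by (auto split: if_splits)
  then have "True \<in> set w" and IH: "word_of_parts (Suc c) (parts_of_word (Suc c) w) = w"
    using "2.IH" by (metis last_in_set, simp)
  then obtain y ys where ys: "parts_of_word (Suc c) w = y # ys"
    by (metis neq_Nil_conv parts_of_word_eq_Nil_iff)
  then have "c < y"
    using parts_of_word_ge[of y "Suc c" w] by simp
  have "word_of_parts c (parts_of_word c (False # w)) = word_of_parts c (y # ys)"
    using ys by simp
  also have "\<dots> = False # word_of_parts (Suc c) (y # ys)"
    using \<open>c < y\<close> by (rule word_of_parts_Cons_gt)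
  finally show ?case
    using IH ys by simp
next
  case (3 c w)
  then show ?case
    by (cases w) auto
qed simp

lemma length_word_of_parts:
  "sorted ys \<Longrightarrow> \<forall>y\<in>set ys. c \<le> y \<Longrightarrow>
    length (word_of_parts c ys) = length ys + (last (c # ys) - c)"
proof (induction ys arbitrary: c)
  case (Cons y ys)
  have "c \<le> y" and "y \<le> last (y # ys)"
    using Cons.prems by auto
  then show ?case
    using Cons by simp
qed simp

lemma last_word_of_parts: "ys \<noteq> [] \<Longrightarrow> word_of_parts c ys \<noteq> [] \<and> last (word_of_parts c ys)"
proof (induction ys arbitrary: c)
  case (Cons y ys)
  then show ?case
    by (cases ys) auto
qed simp

definition adjacent_ones :: "bool list \<Rightarrow> nat" where
  "adjacent_ones w = card {i. 0 < i \<and> i < length w \<and> w ! i \<and> w ! (i - 1)}"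

definition ones_after_even_zeros :: "nat \<Rightarrow> bool list \<Rightarrow> nat" where
  "ones_after_even_zeros c w =
     card {i. i < length w \<and> w ! i \<and> even (c + card {j. j < i \<and> \<not> w ! j})}"

lemma adjacent_ones_eq_card: "adjacent_ones w = card {i. Suc i < length w \<and> w ! Suc i \<and> w ! i}"
proof -
  have "{i. 0 < i \<and> i < length w \<and> w ! i \<and> w ! (i - 1)}
      = Suc ` {i. Suc i < length w \<and> w ! Suc i \<and> w ! i}"
    by (auto simp: image_iff gr0_conv_Suc)
  then show ?thesis
    unfolding adjacent_ones_def by (simp add: card_image)
qed

lemma adjacent_ones_Cons_Cons:
  "adjacent_ones (x # y # w) = (if x \<and> y then 1 else 0) + adjacent_ones (y # w)"
  unfolding adjacent_ones_eq_card length_Cons Suc_less_eq card_less_Suc_split by simp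

text \<open>The leading letter is the one read just before \<open>w\<close>; if it is a one, it closed the
  part \<open>c\<close>, which may repeat as the first part of \<open>w\<close>.\<close>

lemma adjacent_ones_eq_rep:
  "adjacent_ones (False # w) = rep (parts_of_word c w) \<and>
   adjacent_ones (True # w) = rep (c # parts_of_word c w)"
proof (induction c w rule: parts_of_word.induct)
  case (1 c)
  then show ?case
    by (auto simp: adjacent_ones_def rep_def)
next
  case (2 c w)
  have "parts_of_word (Suc c) w = [] \<or> hd (parts_of_word (Suc c) w) \<noteq> c"
    using parts_of_word_ge[of c "Suc c" w] by (cases "parts_of_word (Suc c) w") auto
  then show ?case
    using 2 by (auto simp: adjacent_ones_Cons_Cons rep_Cons)
next
  case (3 c w)
  then show ?case
    by (simp add: adjacent_ones_Cons_Cons rep_Cons)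
qed

lemma ones_after_even_zeros_Cons:
  "ones_after_even_zeros c (x # w) =
     (if x \<and> even c then 1 else 0) + ones_after_even_zeros (if x then c else Suc c) w"
proof -
  have "card {j. j < Suc i \<and> \<not> (x # w) ! j} = (if x then 0 else 1) + card {j. j < i \<and> \<not> w ! j}"
    for i
    unfolding card_less_Suc_split by simp
  then show ?thesis
    unfolding ones_after_even_zeros_def length_Cons card_less_Suc_split
    by (auto intro!: arg_cong[where f = card])
qed

lemma ones_after_even_zeros_eq_even_parts:
  "ones_after_even_zeros c w = even_parts (parts_of_word c w)"
proof (induction c w rule: parts_of_word.induct)
  case (1 c)
  then show ?case
    by (simp add: ones_after_even_zeros_def even_parts_def)
qed (simp_all add: ones_after_even_zeros_Cons even_parts_eq_length_filter)

definition word_of_partition :: "nat list \<Rightarrow> bool list" where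
  "word_of_partition p = word_of_parts 0 (rev p)"

definition partition_of_word :: "bool list \<Rightarrow> nat list" where
  "partition_of_word w = rev (parts_of_word 0 w)"

lemma partition_of_word_of_partition:
  "is_partition p \<Longrightarrow> partition_of_word (word_of_partition p) = p"
  by (simp add: is_partition_def partition_of_word_def word_of_partition_def
      parts_of_word_word_of_parts sorted_wrt_rev)

lemma word_of_partition_in_Lambda:
  assumes "p \<in> Hset n"
  shows "word_of_partition p \<in> Lambda n"
proof -
  have "p \<noteq> []" and sorted: "sorted (rev p)" and pos: "\<forall>x\<in>set p. 0 < x"
    and perimeter: "hd p + length p - 1 = n"
    using assms by (auto simp: Hset_def is_partition_def perimeter_def sorted_wrt_rev)
  then obtain y ys where ys: "rev p = y # ys"
    by (cases "rev p") auto
  then have "0 < y"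
    using pos by (metis list.set_intros(1) set_rev)
  then have w0: "\<not> word_of_partition p ! 0"
    using ys by (simp add: word_of_partition_def nth_append)
  have "length (word_of_partition p) = length p + hd p"
    using length_word_of_parts[OF sorted, of 0] \<open>p \<noteq> []\<close>
    by (simp add: word_of_partition_def last_rev)
  then have length: "length (word_of_partition p) = n + 1"
    using perimeter \<open>p \<noteq> []\<close> by (cases p) auto
  have "last (word_of_partition p)"
    using last_word_of_parts[of "rev p" 0] \<open>p \<noteq> []\<close> by (simp add: word_of_partition_def)
  then have "word_of_partition p ! n"
    using length by (simp add: last_eq_nth_Suc)
  then show ?thesis
    using length w0 by (simp add: Lambda_def)
qed

lemma Lambda_ConsE:
  assumes "w \<in> Lambda n"
  obtains t where "w = False # t" and "last w"
proof -
  have "length w = n + 1" and "\<not> w ! 0" and "w ! n"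
    using assms by (simp_all add: Lambda_def)
  then have "last w"
    by (simp add: last_eq_nth_Suc)
  with \<open>length w = n + 1\<close> \<open>\<not> w ! 0\<close> show ?thesis
    using that by (cases w) auto
qed

lemma word_of_partition_of_word:
  assumes "w \<in> Lambda n"
  shows "word_of_partition (partition_of_word w) = w"
proof -
  have "last w"
    using assms by (rule Lambda_ConsE)
  then show ?thesis
    by (simp add: word_of_partition_def partition_of_word_def word_of_parts_parts_of_word)
qed

lemma partition_of_word_in_Hset:
  assumes "w \<in> Lambda n"
  shows "partition_of_word w \<in> Hset n"
proof -
  obtain t where t: "w = False # t" and "last w"
    using assms by (rule Lambda_ConsE)
  define ys where "ys = parts_of_word 0 w"
  have "True \<in> set w"
    using \<open>last w\<close> t by (metis last_in_set list.distinct(1))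
  then have "ys \<noteq> []"
    by (simp add: ys_def parts_of_word_eq_Nil_iff)
  have sorted: "sorted ys"
    by (simp add: ys_def sorted_parts_of_word)
  have pos: "\<forall>x\<in>set ys. 0 < x"
    using parts_of_word_ge[of _ 1 t] by (fastforce simp: ys_def t)
  have "length w = length ys + last ys"
    using length_word_of_parts[OF sorted, of 0] \<open>ys \<noteq> []\<close> \<open>last w\<close>
    by (simp add: ys_def word_of_parts_parts_of_word)
  moreover have "length w = n + 1"
    using assms by (simp add: Lambda_def)
  ultimately have "last ys + length ys - 1 = n"
    by simp
  then show ?thesis
    using \<open>ys \<noteq> []\<close> sorted pos
    by (simp add: Hset_def is_partition_def perimeter_def partition_of_word_def
        sorted_wrt_rev hd_rev ys_def)
qed

lemma bij_betw_word_of_partition: "bij_betw word_of_partition (Hset n) (Lambda n)"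
proof (rule bij_betw_byWitness[where f' = partition_of_word])
  show "\<forall>p\<in>Hset n. partition_of_word (word_of_partition p) = p"
    by (simp add: Hset_def partition_of_word_of_partition)
qed (auto simp: word_of_partition_of_word word_of_partition_in_Lambda partition_of_word_in_Hset)

lemma Lambda_one_iff:
  assumes "w \<in> Lambda n"
  shows "(1 \<le> i \<and> i \<le> n \<and> w ! i) \<longleftrightarrow> (0 < i \<and> i < length w \<and> w ! i)"
    and "(0 < i \<and> i < length w \<and> w ! i) \<longleftrightarrow> (i < length w \<and> w ! i)"
  using assms by (cases i; auto simp: Lambda_def)+

lemma length_partition_of_word:
  assumes "w \<in> Lambda n"
  shows "length (partition_of_word w) = card {i. 1 \<le> i \<and> i \<le> n \<and> w ! i}"
proof -
  have "{i. 1 \<le> i \<and> i \<le> n \<and> w ! i} = {i. i < length w \<and> w ! i}"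
    using Lambda_one_iff[OF assms] by blast
  then show ?thesis
    by (simp add: partition_of_word_def length_parts_of_word)
qed

lemma rep_partition_of_word:
  assumes "w \<in> Lambda n"
  shows "rep (partition_of_word w) = card {i. 1 \<le> i \<and> i \<le> n \<and> w ! i \<and> w ! (i - 1)}"
proof -
  obtain t where t: "w = False # t"
    using assms by (rule Lambda_ConsE)
  have "rep (partition_of_word w) = adjacent_ones w"
    using adjacent_ones_eq_rep[of t 1] by (simp add: partition_of_word_def rep_rev t)
  moreover have "{i. 1 \<le> i \<and> i \<le> n \<and> w ! i \<and> w ! (i - 1)}
      = {i. 0 < i \<and> i < length w \<and> w ! i \<and> w ! (i - 1)}"
    using Lambda_one_iff[OF assms] by blast
  ultimately show ?thesis
    by (simp add: adjacent_ones_def)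
qed

lemma even_parts_partition_of_word:
  assumes "w \<in> Lambda n"
  shows "even_parts (partition_of_word w) =
    card {i. 1 \<le> i \<and> i \<le> n \<and> w ! i \<and> even (card {j. j < i \<and> \<not> w ! j})}"
proof -
  have "{i. 1 \<le> i \<and> i \<le> n \<and> w ! i \<and> even (card {j. j < i \<and> \<not> w ! j})}
      = {i. i < length w \<and> w ! i \<and> even (card {j. j < i \<and> \<not> w ! j})}"
    using Lambda_one_iff[OF assms] by blast
  then show ?thesis
    using ones_after_even_zeros_eq_even_parts[of 0 w]
    by (simp add: ones_after_even_zeros_def partition_of_word_def even_parts_rev)
qed

theorem lemma2p8:
  fixes n :: nat
  assumes "0 < n"
  shows "\<exists>f. bij_betw f (Hset n) (Lambda n) \<and>
    (\<forall>p\<in>Hset n.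
       length p = card {i. 1 \<le> i \<and> i \<le> n \<and> f p ! i} \<and>
       rep p = card {i. 1 \<le> i \<and> i \<le> n \<and> f p ! i \<and> f p ! (i - 1)} \<and>
       even_parts p = card {i. 1 \<le> i \<and> i \<le> n \<and> f p ! i \<and>
                               even (card {j. j < i \<and> \<not> f p ! j})})"
proof (intro exI conjI ballI)
  show "bij_betw word_of_partition (Hset n) (Lambda n)"
    by (rule bij_betw_word_of_partition)
  fix p
  assume "p \<in> Hset n"
  then have w: "word_of_partition p \<in> Lambda n"
    and p: "p = partition_of_word (word_of_partition p)"
    by (simp_all add: word_of_partition_in_Lambda partition_of_word_of_partition Hset_def)
  show "length p = card {i. 1 \<le> i \<and> i \<le> n \<and> word_of_partition p ! i}"
    by (subst p) (rule length_partition_of_word[OF w])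
  show "rep p = card {i. 1 \<le> i \<and> i \<le> n \<and> word_of_partition p ! i \<and> word_of_partition p ! (i - 1)}"
    by (subst p) (rule rep_partition_of_word[OF w])
  show "even_parts p = card {i. 1 \<le> i \<and> i \<le> n \<and> word_of_partition p ! i \<and>
      even (card {j. j < i \<and> \<not> word_of_partition p ! j})}"
    by (subst p) (rule even_parts_partition_of_word[OF w])
qed

end
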